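(* Consider the two-layer multi-item order fulfillment problem described in the context with a single FDC ($K=1$), fixed costs $f_0\ge0$, $f_1>0$, and variable costs in $[a,b]$ for constants $b>a>0$. Let \textsc{Better-of-Two} run \textsc{Cost-Comparison AdjV-Priority} whenever $f_0\le f_1$ or $1+\max\{f_0/f_1,\sqrt{b/a}\}\le(4+\sqrt2)\max\{\sqrt{f_0/(2a)},\sqrt{b/a}\}$, and otherwise run \textsc{Order-Size AdjV-Priority} with $\eta=\sqrt{\max\{f_0/2,b\}/a}$ and $\theta=f_0/(2a\eta)$. Then \[\mathfrak R(\textsc{Better-of-Two})\le\min\left\{1+\max\left\{\frac{f_0}{f_1},\sqrt{\frac ba}\right\},\ B\right\}\le\max\left\{\min\left\{2\frac{f_0}{f_1},\ (2\sqrt2+1)\sqrt{\frac{f_0}{a}}\right\},\ (4+\sqrt2)\sqrt{\frac ba}\right\},\] where $B=(4+\sqrt2)\sqrt{\max\{f_0/2,b\}/a}$ if $f_0\ge f_1$ and $B=+\infty$ if $f_0<f_1$.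
   Context: Problem with one FDC (index $1$) and one RDC (index $0$, unlimited inventory). The FDC initially holds $I_{1,0}^i\ge0$ units of item $i\in[n]$, never replenished. In periods $t=1,\dots,T$ an order $\boldsymbol S_t=(S_t^i)_i$ of nonnegative integers arrives; the policy must immediately and irrevocably choose $m_{0,t}^i,m_{1,t}^i\ge0$ with $m_{0,t}^i+m_{1,t}^i=S_t^i$ and $m_{1,t}^i\le I_{1,t-1}^i$, where $I_{1,t}^i=I_{1,0}^i-\sum_{\tau\le t}m_{1,\tau}^i$. Period cost $\sum_{k=0,1}[f_k\mathbb{I}(\sum_im_{k,t}^i>0)+\sum_ic_{k,t}^im_{k,t}^i]$; total cost is the sum. Online policies use only fixed costs, initial inventories, constants $a,b$ and orders/variable costs up to the current period. $\mathfrak R(\mathrm{ALG})$ is the supremum of (expected) policy cost over offline optimal cost, over all $n,T$, initial inventories, variable costs in $[a,b]$ and order sequences. \textsc{Cost-Comparison AdjV-Priority}: in period $t$, for each $i$, $\hat m_{1,t}^i=\min\{S_t^i,I_{1,t-1}^i\}$ if $c_{1,t}^i<\sqrt{a/b}\,c_{0,t}^i$ else $0$, $\hat m_{0,t}^i=S_t^i-\hat m_{1,t}^i$; if $\sum_{k=0,1}[f_k\mathbb{I}(\sum_i\hat m_{k,t}^i>0)+\sum_ic_{k,t}^i\hat m_{k,t}^i]>f_0+\sum_ic_{0,t}^iS_t^i$ then the whole order is fulfilled from the RDC, otherwise $m=\hat m$. \textsc{Order-Size AdjV-Priority} with parameters $\eta\ge1,\theta\ge0$: in period $t$, for each $i$,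 $\hat m_{1,t}^i=\min\{S_t^i,I_{1,t-1}^i\}$ if $c_{1,t}^i<c_{0,t}^i/\eta$ else $0$, $\hat m_{0,t}^i=S_t^i-\hat m_{1,t}^i$; if $\sum_iS_t^i\le\theta$ and $I_{1,t-1}^i\ge S_t^i$ for all $i$, the whole order is fulfilled from the FDC, otherwise $m=\hat m$. *)

theory Defs
  imports "HOL-Analysis.Analysis"
begin

text \<open>An instance with a single FDC (index 1) and a single RDC (index 0).
  Items are indexed by i < n, periods by t in {1..T}.
  init_inv i = I_{1,0}^i, orders t i = S_t^i, cost0 t i = c_{0,t}^i, cost1 t i = c_{1,t}^i.\<close>
record inst =
  n_items :: nat
  horizon :: nat
  init_inv :: "nat \<Rightarrow> nat"
  orders :: "nat \<Rightarrow> nat \<Rightarrow> nat"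
  cost0 :: "nat \<Rightarrow> nat \<Rightarrow> real"
  cost1 :: "nat \<Rightarrow> nat \<Rightarrow> real"

definition valid_inst :: "real \<Rightarrow> real \<Rightarrow> inst \<Rightarrow> bool" where
  "valid_inst a b x \<longleftrightarrow>
     (\<forall>t \<in> {1..horizon x}. \<forall>i < n_items x.
        a \<le> cost0 x t i \<and> cost0 x t i \<le> b \<and> a \<le> cost1 x t i \<and> cost1 x t i \<le> b)"

text \<open>Cost of period t when m1 i = m_{1,t}^i units are shipped from the FDC
  and m_{0,t}^i = S_t^i - m_{1,t}^i from the RDC.\<close>
definition period_cost :: "real \<Rightarrow> real \<Rightarrow> inst \<Rightarrow> nat \<Rightarrow> (nat \<Rightarrow> nat) \<Rightarrow> real" where
  "period_cost f0 f1 x t m1 =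
     f0 * (if (\<Sum>i<n_items x. orders x t i - m1 i) > 0 then 1 else 0)
   + f1 * (if (\<Sum>i<n_items x. m1 i) > 0 then 1 else 0)
   + (\<Sum>i<n_items x. cost0 x t i * real (orders x t i - m1 i) + cost1 x t i * real (m1 i))"

definition feasible_plan :: "inst \<Rightarrow> (nat \<Rightarrow> nat \<Rightarrow> nat) \<Rightarrow> bool" where
  "feasible_plan x m1 \<longleftrightarrow>
     (\<forall>t \<in> {1..horizon x}. \<forall>i < n_items x.
        m1 t i \<le> orders x t i \<and> (\<Sum>\<tau>\<in>{1..t}. m1 \<tau> i) \<le> init_inv x i)"

definition total_cost :: "real \<Rightarrow> real \<Rightarrow> inst \<Rightarrow> (nat \<Rightarrow> nat \<Rightarrow> nat) \<Rightarrow> real" where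
  "total_cost f0 f1 x m1 = (\<Sum>t\<in>{1..horizon x}. period_cost f0 f1 x t (m1 t))"

definition OPT :: "real \<Rightarrow> real \<Rightarrow> inst \<Rightarrow> real" where
  "OPT f0 f1 x = Inf {total_cost f0 f1 x m1 | m1. feasible_plan x m1}"

text \<open>An (online) policy step: given the instance, the current period t and the
  current FDC inventory I_{1,t-1}, it returns the FDC shipments m_{1,t}.
  The policies below only inspect the data of period t.\<close>
type_synonym policy = "inst \<Rightarrow> nat \<Rightarrow> (nat \<Rightarrow> nat) \<Rightarrow> (nat \<Rightarrow> nat)"

fun inv_run :: "policy \<Rightarrow> inst \<Rightarrow> nat \<Rightarrow> (nat \<Rightarrow> nat)" where
  "inv_run P x 0 = init_inv x"
| "inv_run P x (Suc t) = (\<lambda>i. inv_run P x t i - P x (Suc t) (inv_run P x t) i)"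

definition plan_run :: "policy \<Rightarrow> inst \<Rightarrow> nat \<Rightarrow> nat \<Rightarrow> nat" where
  "plan_run P x t = P x t (inv_run P x (t - 1))"

definition policy_cost :: "real \<Rightarrow> real \<Rightarrow> policy \<Rightarrow> inst \<Rightarrow> real" where
  "policy_cost f0 f1 P x = total_cost f0 f1 x (plan_run P x)"

definition comp_ratio :: "real \<Rightarrow> real \<Rightarrow> real \<Rightarrow> real \<Rightarrow> policy \<Rightarrow> ereal" where
  "comp_ratio f0 f1 a b P =
     (SUP x \<in> {x. valid_inst a b x}. ereal (policy_cost f0 f1 P x / OPT f0 f1 x))"

definition cc_step :: "real \<Rightarrow> real \<Rightarrow> real \<Rightarrow> real \<Rightarrow> policy" where
  "cc_step f0 f1 a b x t cur =
     (let mh = (\<lambda>i. if cost1 x t i < sqrt (a / b) * cost0 x t i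
                     then min (orders x t i) (cur i) else 0)
      in if period_cost f0 f1 x t mh > f0 + (\<Sum>i<n_items x. cost0 x t i * real (orders x t i))
         then (\<lambda>i. 0) else mh)"

definition os_step :: "real \<Rightarrow> real \<Rightarrow> policy" where
  "os_step \<eta> \<theta> x t cur =
     (let mh = (\<lambda>i. if cost1 x t i < cost0 x t i / \<eta>
                     then min (orders x t i) (cur i) else 0)
      in if real (\<Sum>i<n_items x. orders x t i) \<le> \<theta> \<and> (\<forall>i < n_items x. cur i \<ge> orders x t i)
         then orders x t else mh)"

definition better_of_two :: "real \<Rightarrow> real \<Rightarrow> real \<Rightarrow> real \<Rightarrow> policy" where
  "better_of_two f0 f1 a b =
     (if f0 \<le> f1 \<or>
         1 + max (f0 / f1) (sqrt (b / a)) \<le> (4 + sqrt 2) * max (sqrt (f0 / (2 * a))) (sqrt (b / a))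
      then cc_step f0 f1 a b
      else (let \<eta> = sqrt (max (f0 / 2) b / a) in os_step \<eta> (f0 / (2 * a * \<eta>))))"

end

theory Submission
  imports Defs
begin

(* Both policies are analysed period by period with a potential that charges the policy alpha
   for every unit it ships from the FDC beyond what an offline plan ships there.  Whenever the
   offline plan wants FDC stock that the policy has already used, the policy has shipped that
   much more than the plan before, so the plan's total shortfall is at most the policy's total
   surplus, and per-period inequalities
     cost(ALG_t) + alpha * surplus_t <= R * cost(OPT_t) + alpha * shortfall_t
   add up to ALG <= R * OPT for every feasible offline plan.

   Cost-Comparison AdjV-Priority satisfies them with R = 1 + max(f0/f1, sqrt(b/a)) and
   alpha = b - a: an item leaves the FDC only if this saves a factor sqrt(b/a) of variable cost,
   and the cost comparison never pays more than serving the whole order from the RDC.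
   If f1 <= f0, Order-Size AdjV-Priority with eta = sqrt(max(f0/2, b)/a) satisfies them with
   R = (4 + sqrt 2) * eta and alpha = 4 * max(f0/2, b): an order served entirely from the FDC is
   smaller than theta and hence cheap compared with f0, and otherwise the fixed cost f0 of the
   RDC is paid by the offline plan, by the potential, or by the variable cost of an order larger
   than theta.  Better-of-Two runs the policy with the smaller of the two bounds. *)

definition var_cost :: "inst \<Rightarrow> nat \<Rightarrow> (nat \<Rightarrow> nat) \<Rightarrow> real" where
  "var_cost x t m =
     (\<Sum>i<n_items x. cost0 x t i * real (orders x t i - m i) + cost1 x t i * real (m i))"

definition costs_within :: "real \<Rightarrow> real \<Rightarrow> inst \<Rightarrow> nat \<Rightarrow> bool" where
  "costs_within a b x t \<longleftrightarrow>
     (\<forall>i < n_items x. a \<le> cost0 x t i \<and> cost0 x t i \<le> b \<and> a \<le> cost1 x t i \<and> cost1 x t i \<le> b)"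

lemma valid_inst_iff_costs_within:
  "valid_inst a b x \<longleftrightarrow> (\<forall>t \<in> {1..horizon x}. costs_within a b x t)"
  unfolding valid_inst_def costs_within_def ..

lemma period_cost_eq_var_cost:
  "period_cost f0 f1 x t m =
     f0 * (if (\<Sum>i<n_items x. orders x t i - m i) > 0 then 1 else 0)
   + f1 * (if (\<Sum>i<n_items x. m i) > 0 then 1 else 0) + var_cost x t m"
  unfolding period_cost_def var_cost_def ..

lemma var_cost_nonneg:
  assumes "costs_within a b x t" and "0 \<le> a"
  shows "0 \<le> var_cost x t m"
  unfolding var_cost_def
  using assms by (intro sum_nonneg add_nonneg_nonneg mult_nonneg_nonneg)
    (auto simp: costs_within_def intro: order_trans)

lemma period_cost_nonneg:
  assumes "costs_within a b x t" and "0 \<le> a" and "0 \<le> f0" and "0 \<le> f1"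
  shows "0 \<le> period_cost f0 f1 x t m"
  using var_cost_nonneg[OF assms(1,2), of m] assms(3,4)
  unfolding period_cost_eq_var_cost by simp

lemma period_cost_cong:
  assumes "\<And>i. i < n_items x \<Longrightarrow> m i = m' i"
  shows "period_cost f0 f1 x t m = period_cost f0 f1 x t m'"
  unfolding period_cost_def using assms by (intro arg_cong2[where f = "(+)"] sum.cong) auto

lemma period_cost_le_fixed_plus_var_cost:
  assumes "0 \<le> f0" and "0 \<le> f1"
  shows "period_cost f0 f1 x t m \<le> f0 + f1 + var_cost x t m"
  using assms unfolding period_cost_eq_var_cost by simp

lemma var_cost_bounds:
  assumes "costs_within a b x t" and "\<And>i. i < n_items x \<Longrightarrow> m i \<le> orders x t i"
  shows "a * real (\<Sum>i<n_items x. orders x t i) \<le> var_cost x t m"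
    and "var_cost x t m \<le> b * real (\<Sum>i<n_items x. orders x t i)"
proof -
  have "a * real (orders x t i) \<le> cost0 x t i * real (orders x t i - m i) + cost1 x t i * real (m i)
      \<and> cost0 x t i * real (orders x t i - m i) + cost1 x t i * real (m i) \<le> b * real (orders x t i)"
    if "i < n_items x" for i
  proof -
    have split: "real (orders x t i) = real (orders x t i - m i) + real (m i)"
      using assms(2)[OF that] by simp
    have "a \<le> cost0 x t i" "cost0 x t i \<le> b" "a \<le> cost1 x t i" "cost1 x t i \<le> b"
      using assms(1) that unfolding costs_within_def by auto
    then show ?thesis
      unfolding split distrib_left by (intro conjI add_mono mult_right_mono) simp_all
  qed
  then show "a * real (\<Sum>i<n_items x. orders x t i) \<le> var_cost x t m"
    and "var_cost x t m \<le> b * real (\<Sum>i<n_items x. orders x t i)"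
    unfolding var_cost_def of_nat_sum sum_distrib_left by (auto intro: sum_mono)
qed

section \<open>Amortized competitiveness\<close>

(* cur is the policy's FDC inventory before period t, m its FDC shipments and op those of the
   offline plan. *)
definition amortized_le :: "real \<Rightarrow> real \<Rightarrow> real \<Rightarrow> real \<Rightarrow> inst \<Rightarrow> nat \<Rightarrow>
    (nat \<Rightarrow> nat) \<Rightarrow> (nat \<Rightarrow> nat) \<Rightarrow> (nat \<Rightarrow> nat) \<Rightarrow> bool" where
  "amortized_le f0 f1 R \<alpha> x t cur m op \<longleftrightarrow>
     period_cost f0 f1 x t m + \<alpha> * (\<Sum>i<n_items x. real (m i - op i))
     \<le> R * period_cost f0 f1 x t op + \<alpha> * (\<Sum>i<n_items x. real (op i - cur i))"

lemma inventory_conservation: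
  fixes inv ship :: "nat \<Rightarrow> nat"
  assumes "\<And>k. ship (Suc k) \<le> inv k" and "\<And>k. inv (Suc k) = inv k - ship (Suc k)"
  shows "inv k + (\<Sum>k'\<in>{1..k}. ship k') = inv 0"
proof (induction k)
  case (Suc k)
  have "inv (Suc k) + ship (Suc k) = inv k"
    using assms[of k] by simp
  with Suc.IH show ?case by simp
qed simp

lemma shortfall_le_surplus:
  fixes inv ship dem :: "nat \<Rightarrow> nat"
  assumes ship_le: "\<And>k. ship (Suc k) \<le> inv k"
    and inv_Suc: "\<And>k. inv (Suc k) = inv k - ship (Suc k)"
    and dem: "\<And>k. k \<in> {1..T} \<Longrightarrow> (\<Sum>k'\<in>{1..k}. dem k') \<le> inv 0"
  shows "(\<Sum>k\<in>{1..T}. dem k - inv (k - 1)) \<le> (\<Sum>k\<in>{1..T}. ship k - dem k)"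
proof -
  note conserved = inventory_conservation[of ship inv, OF ship_le inv_Suc]
  \<comment> \<open>The second conjunct is needed because the shortfall of a period is bounded through
    the stock left, which is inv 0 minus everything shipped so far.\<close>
  have "(\<Sum>k\<in>{1..T'}. dem k - inv (k - 1)) \<le> (\<Sum>k\<in>{1..T'}. ship k - dem k) \<and>
        (\<Sum>k\<in>{1..T'}. dem k - inv (k - 1)) + (\<Sum>k\<in>{1..T'}. ship k)
          \<le> (\<Sum>k\<in>{1..T'}. ship k - dem k) + (\<Sum>k\<in>{1..T'}. dem k)"
    if "T' \<le> T" for T'
    using that
  proof (induction T')
    case 0
    show ?case by simp
  next
    case (Suc T')
    have "(\<Sum>k\<in>{1..Suc T'}. dem k) \<le> inv 0"
      using dem[of "Suc T'"] Suc.prems by simp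
    with Suc.IH Suc.prems conserved[of T']
      ship_le[of T'] inv_Suc[of T']
    show ?case by (simp, arith)
  qed
  then show ?thesis by blast
qed

lemma policy_cost_le_by_amortization:
  assumes ship_le: "\<And>t cur i. i < n_items x \<Longrightarrow> P x t cur i \<le> cur i"
    and feas: "feasible_plan x m" and "0 \<le> \<alpha>"
    and amortized: "\<And>t. t \<in> {1..horizon x} \<Longrightarrow>
      amortized_le f0 f1 R \<alpha> x t (inv_run P x (t - 1)) (plan_run P x t) (m t)"
  shows "policy_cost f0 f1 P x \<le> R * total_cost f0 f1 x m"
proof -
  let ?T = "{1..horizon x}" and ?I = "{..<n_items x}"
  define surplus where "surplus t i = real (plan_run P x t i - m t i)" for t i
  define shortfall where "shortfall t i = real (m t i - inv_run P x (t - 1) i)" for t i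
  have item: "(\<Sum>t\<in>?T. shortfall t i) \<le> (\<Sum>t\<in>?T. surplus t i)" if "i \<in> ?I" for i
  proof -
    have "(\<Sum>t\<in>?T. m t i - inv_run P x (t - 1) i) \<le> (\<Sum>t\<in>?T. plan_run P x t i - m t i)"
      by (rule shortfall_le_surplus[where inv = "\<lambda>k. inv_run P x k i"])
        (use that ship_le feas in \<open>auto simp: plan_run_def feasible_plan_def\<close>)
    then show ?thesis
      unfolding shortfall_def surplus_def of_nat_sum[symmetric] of_nat_le_iff .
  qed
  have "(\<Sum>t\<in>?T. \<Sum>i\<in>?I. shortfall t i) \<le> (\<Sum>t\<in>?T. \<Sum>i\<in>?I. surplus t i)"
    using sum_mono[OF item] by (simp only: sum.swap[of _ ?T])
  then have "\<alpha> * (\<Sum>t\<in>?T. \<Sum>i\<in>?I. shortfall t i) \<le> \<alpha> * (\<Sum>t\<in>?T. \<Sum>i\<in>?I. surplus t i)"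
    using \<open>0 \<le> \<alpha>\<close> by (rule mult_left_mono)
  moreover have "(\<Sum>t\<in>?T. period_cost f0 f1 x t (plan_run P x t) + \<alpha> * (\<Sum>i\<in>?I. surplus t i))
      \<le> (\<Sum>t\<in>?T. R * period_cost f0 f1 x t (m t) + \<alpha> * (\<Sum>i\<in>?I. shortfall t i))"
    using amortized unfolding amortized_le_def surplus_def shortfall_def by (intro sum_mono) auto
  ultimately show ?thesis
    unfolding policy_cost_def total_cost_def sum.distrib sum_distrib_left[symmetric] by linarith
qed

lemma comp_ratio_le:
  assumes "0 < R" and "0 \<le> f0" and "0 \<le> f1" and "0 \<le> a"
    and competitive: "\<And>x m. valid_inst a b x \<Longrightarrow> feasible_plan x m \<Longrightarrow>
      policy_cost f0 f1 P x \<le> R * total_cost f0 f1 x m"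
  shows "comp_ratio f0 f1 a b P \<le> ereal R"
  unfolding comp_ratio_def
proof (rule SUP_least)
  fix x assume "x \<in> {x. valid_inst a b x}"
  then have valid: "valid_inst a b x" by simp
  let ?costs = "{total_cost f0 f1 x m | m. feasible_plan x m}"
  have "feasible_plan x (\<lambda>_ _. 0)"
    by (simp add: feasible_plan_def)
  then have nonempty: "?costs \<noteq> {}" by blast
  have "0 \<le> total_cost f0 f1 x m" for m
    unfolding total_cost_def using valid assms(2-4)
    by (intro sum_nonneg period_cost_nonneg[of a b x]) (auto simp: valid_inst_iff_costs_within)
  then have OPT_nonneg: "0 \<le> OPT f0 f1 x"
    unfolding OPT_def by (intro cInf_greatest[OF nonempty]) auto
  have "policy_cost f0 f1 P x / R \<le> OPT f0 f1 x"
    unfolding OPT_def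
    using competitive[OF valid] \<open>0 < R\<close>
    by (intro cInf_greatest[OF nonempty]) (auto simp: divide_le_eq mult.commute)
  \<comment> \<open>Instances with OPT = 0 have ratio 0, since x / 0 = 0.\<close>
  then show "ereal (policy_cost f0 f1 P x / OPT f0 f1 x) \<le> ereal R"
    using OPT_nonneg \<open>0 < R\<close>
    by (cases "OPT f0 f1 x = 0") (simp_all add: divide_le_eq mult.commute)
qed

lemma comp_ratio_le_by_amortization:
  assumes "0 < R" and "0 \<le> f0" and "0 \<le> f1" and "0 \<le> a" and "0 \<le> \<alpha>"
    and ship_le: "\<And>x t cur i. i < n_items x \<Longrightarrow> P x t cur i \<le> cur i"
    and amortized: "\<And>x t cur op. costs_within a b x t \<Longrightarrow>
      (\<And>i. i < n_items x \<Longrightarrow> op i \<le> orders x t i) \<Longrightarrow>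
      amortized_le f0 f1 R \<alpha> x t cur (P x t cur) op"
  shows "comp_ratio f0 f1 a b P \<le> ereal R"
proof (rule comp_ratio_le[OF assms(1-4)])
  fix x m assume valid: "valid_inst a b x" and feas: "feasible_plan x m"
  show "policy_cost f0 f1 P x \<le> R * total_cost f0 f1 x m"
  proof (rule policy_cost_le_by_amortization)
    show "\<And>t cur i. i < n_items x \<Longrightarrow> P x t cur i \<le> cur i" by (rule ship_le)
  next
    fix t assume "t \<in> {1..horizon x}"
    then show "amortized_le f0 f1 R \<alpha> x t (inv_run P x (t - 1)) (plan_run P x t) (m t)"
      using valid feas unfolding plan_run_def
      by (intro amortized) (auto simp: valid_inst_iff_costs_within feasible_plan_def)
  qed (use feas \<open>0 \<le> \<alpha>\<close> in auto)
qed

section \<open>AdjV-Priority plans\<close>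

(* The tentative plan of both policies: threshold sqrt(b/a) for Cost-Comparison and eta for
   Order-Size AdjV-Priority. *)
definition adjv_plan :: "real \<Rightarrow> policy" where
  "adjv_plan \<gamma> x t cur =
     (\<lambda>i. if cost1 x t i < cost0 x t i / \<gamma> then min (orders x t i) (cur i) else 0)"

lemma adjv_plan_le_orders: "adjv_plan \<gamma> x t cur i \<le> orders x t i"
  by (simp add: adjv_plan_def)

lemma scale_le: "1 \<le> k \<Longrightarrow> 0 \<le> z \<Longrightarrow> z \<le> k * (z :: real)"
  using mult_right_mono[of 1 k z] by simp

lemma rdc_item_amortized:
  fixes S op cur :: nat and c0 c1 B \<beta> :: real
  assumes "0 \<le> c0" and "op \<le> S" and "1 \<le> B" and "0 \<le> \<beta>" and "c0 \<le> B * c1"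
  shows "c0 * real S \<le> B * (c0 * real (S - op) + c1 * real op) + \<beta> * real (op - cur)"
proof -
  have "c0 * real S = c0 * real (S - op) + c0 * real op"
    using \<open>op \<le> S\<close> by (simp add: of_nat_diff algebra_simps)
  also have "\<dots> \<le> B * (c0 * real (S - op)) + B * c1 * real op"
    using assms by (intro add_mono scale_le mult_right_mono) auto
  also have "\<dots> \<le> B * (c0 * real (S - op) + c1 * real op) + \<beta> * real (op - cur)"
    using \<open>0 \<le> \<beta>\<close> by (simp add: algebra_simps)
  finally show ?thesis .
qed

lemma fdc_item_amortized:
  fixes S op cur :: nat and c0 c1 B \<alpha> \<beta> :: real
  assumes "0 \<le> c0" and "0 \<le> c1" and "op \<le> S" and "1 \<le> B" and "0 \<le> \<beta>"
    and "c1 + \<alpha> \<le> B * c0" and "c0 - c1 \<le> \<beta>"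
  defines "m \<equiv> min S cur"
  shows "c0 * real (S - m) + c1 * real m + \<alpha> * real (m - op)
    \<le> B * (c0 * real (S - op) + c1 * real op) + \<beta> * real (op - cur)"
proof (cases "op \<le> m")
  case True
  have "c0 * real (S - m) + c1 * real m + \<alpha> * real (m - op)
    = c0 * real (S - m) + c1 * real op + (c1 + \<alpha>) * real (m - op)"
    using True by (simp add: of_nat_diff algebra_simps)
  also have "\<dots> \<le> B * c0 * real (S - m) + B * c1 * real op + B * c0 * real (m - op)"
    using assms by (intro add_mono mult_right_mono) (auto simp: mult.assoc intro: scale_le)
  also have "\<dots> = B * (c0 * real (S - op) + c1 * real op)"
    using True by (simp add: m_def of_nat_diff algebra_simps)
  finally show ?thesis
    using \<open>0 \<le> \<beta>\<close> by (simp add: add_increasing2)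
next
  case False
  then have "m = cur" and "cur < op"
    using \<open>op \<le> S\<close> unfolding m_def by auto
  then have "c0 * real (S - m) + c1 * real m + \<alpha> * real (m - op)
    = c0 * real (S - op) + c1 * real op + (c0 - c1) * real (op - cur)"
    using \<open>op \<le> S\<close> by (simp add: of_nat_diff algebra_simps)
  also have "\<dots> \<le> B * (c0 * real (S - op) + c1 * real op) + \<beta> * real (op - cur)"
    using assms by (intro add_mono scale_le mult_right_mono) auto
  finally show ?thesis .
qed

lemma adjv_item_amortized:
  fixes S op cur :: nat and a b c0 c1 \<gamma> B \<alpha> \<beta> :: real
  assumes c0: "a \<le> c0" "c0 \<le> b" and c1: "a \<le> c1" "c1 \<le> b" and "0 \<le> a"
    and op: "op \<le> S" and \<gamma>: "1 \<le> \<gamma>" "\<gamma> \<le> B"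
    and \<alpha>: "\<alpha> \<le> (B - 1) * \<gamma> * a" and \<beta>: "b - a \<le> \<beta>"
  defines "m \<equiv> if c1 < c0 / \<gamma> then min S cur else 0"
  shows "c0 * real (S - m) + c1 * real m + \<alpha> * real (m - op)
    \<le> B * (c0 * real (S - op) + c1 * real op) + \<beta> * real (op - cur)"
proof (cases "c1 < c0 / \<gamma>")
  case False
  then have "c0 \<le> \<gamma> * c1"
    using \<gamma> by (simp add: not_less pos_divide_le_eq mult.commute)
  also have "\<dots> \<le> B * c1"
    using \<gamma> c1 \<open>0 \<le> a\<close> by (intro mult_right_mono) auto
  finally show ?thesis
    using False rdc_item_amortized[OF _ op, of c0 B \<beta> c1 cur] assms unfolding m_def by simp
next
  case True
  then have "\<gamma> * c1 < c0"
    using \<gamma> by (simp add: field_simps)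
  moreover have "c1 \<le> \<gamma> * c1" and "\<gamma> * a \<le> \<gamma> * c1"
    using \<gamma> c1 \<open>0 \<le> a\<close> by (auto intro: scale_le mult_left_mono)
  ultimately have "\<gamma> * a \<le> c0" and "c1 \<le> c0"
    by linarith+
  then have "\<alpha> \<le> (B - 1) * c0"
    using \<alpha> mult_left_mono[OF \<open>\<gamma> * a \<le> c0\<close>, of "B - 1"] \<gamma> by (simp add: mult.assoc)
  then have "c1 + \<alpha> \<le> B * c0"
    using \<open>c1 \<le> c0\<close> by (simp add: algebra_simps)
  then show ?thesis
    using True fdc_item_amortized[OF _ _ op, of c0 c1 B \<beta> \<alpha> cur] assms unfolding m_def by simp
qed

lemma var_cost_adjv_plan_amortized:
  assumes costs: "costs_within a b x t" and "0 \<le> a"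
    and op: "\<And>i. i < n_items x \<Longrightarrow> op i \<le> orders x t i"
    and "1 \<le> \<gamma>" "\<gamma> \<le> B" "\<alpha> \<le> (B - 1) * \<gamma> * a" "b - a \<le> \<beta>"
  shows "var_cost x t (adjv_plan \<gamma> x t cur) + \<alpha> * (\<Sum>i<n_items x. real (adjv_plan \<gamma> x t cur i - op i))
    \<le> B * var_cost x t op + \<beta> * (\<Sum>i<n_items x. real (op i - cur i))"
proof -
  have "(\<Sum>i<n_items x. cost0 x t i * real (orders x t i - adjv_plan \<gamma> x t cur i)
        + cost1 x t i * real (adjv_plan \<gamma> x t cur i) + \<alpha> * real (adjv_plan \<gamma> x t cur i - op i))
    \<le> (\<Sum>i<n_items x. B * (cost0 x t i * real (orders x t i - op i) + cost1 x t i * real (op i))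
        + \<beta> * real (op i - cur i))"
    unfolding adjv_plan_def
    using assms by (intro sum_mono adjv_item_amortized) (auto simp: costs_within_def)
  then show ?thesis
    unfolding var_cost_def sum_distrib_left by (simp add: sum.distrib)
qed

lemma adjv_plan_shipments_le:
  assumes costs: "costs_within a b x t" and "0 \<le> a" and "0 < \<gamma>" and "0 \<le> K"
    and \<alpha>: "\<alpha> \<le> K * \<gamma> * a"
  shows "\<alpha> * (\<Sum>i<n_items x. real (adjv_plan \<gamma> x t cur i)) \<le> K * var_cost x t (\<lambda>_. 0)"
proof -
  have "\<alpha> * real (adjv_plan \<gamma> x t cur i) \<le> K * (cost0 x t i * real (orders x t i))"
    if i: "i < n_items x" for i
  proof (cases "cost1 x t i < cost0 x t i / \<gamma>")
    case True
    then have "\<gamma> * cost1 x t i < cost0 x t i"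
      using \<open>0 < \<gamma>\<close> by (simp add: field_simps)
    moreover have "\<gamma> * a \<le> \<gamma> * cost1 x t i"
      using costs i \<open>0 < \<gamma>\<close> by (intro mult_left_mono) (auto simp: costs_within_def)
    ultimately have "\<gamma> * a \<le> cost0 x t i"
      by linarith
    then have "\<alpha> \<le> K * cost0 x t i"
      using \<alpha> mult_left_mono[of "\<gamma> * a" "cost0 x t i" K] \<open>0 \<le> K\<close> by (simp add: mult.assoc)
    then have "\<alpha> * real (adjv_plan \<gamma> x t cur i) \<le> K * cost0 x t i * real (adjv_plan \<gamma> x t cur i)"
      by (rule mult_right_mono) simp
    also have "\<dots> \<le> K * cost0 x t i * real (orders x t i)"
      using costs i \<open>0 \<le> a\<close> \<open>0 \<le> K\<close> unfolding adjv_plan_def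
      by (intro mult_left_mono) (auto simp: costs_within_def)
    finally show ?thesis by (simp add: mult.assoc)
  next
    case False
    then show ?thesis
      using costs i \<open>0 \<le> a\<close> \<open>0 \<le> K\<close> by (auto simp: adjv_plan_def costs_within_def)
  qed
  then show ?thesis
    unfolding var_cost_def sum_distrib_left by (intro sum_mono) simp
qed

section \<open>Cost-Comparison AdjV-Priority\<close>

lemma cc_step_eq_adjv_plan:
  "cc_step f0 f1 a b x t cur =
    (if period_cost f0 f1 x t (adjv_plan (sqrt (b / a)) x t cur)
          > f0 + (\<Sum>i<n_items x. cost0 x t i * real (orders x t i))
     then (\<lambda>_. 0) else adjv_plan (sqrt (b / a)) x t cur)"
proof -
  have "sqrt (a / b) * c = c / sqrt (b / a)" for c
    by (metis inverse_divide real_sqrt_inverse divide_inverse mult.commute)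
  then show ?thesis
    unfolding cc_step_def adjv_plan_def Let_def by simp
qed

lemma cc_step_cost_le:
  assumes "0 \<le> f0"
  shows "period_cost f0 f1 x t (cc_step f0 f1 a b x t cur)
           \<le> period_cost f0 f1 x t (adjv_plan (sqrt (b / a)) x t cur)"
    and "period_cost f0 f1 x t (cc_step f0 f1 a b x t cur) \<le> period_cost f0 f1 x t (\<lambda>_. 0)"
proof -
  let ?m = "adjv_plan (sqrt (b / a)) x t cur"
  let ?S = "\<Sum>i<n_items x. orders x t i" and ?rdc = "\<Sum>i<n_items x. cost0 x t i * real (orders x t i)"
  have rdc_cost: "period_cost f0 f1 x t (\<lambda>_. 0) = f0 * (if ?S > 0 then 1 else 0) + ?rdc"
    by (simp add: period_cost_def)
  show "period_cost f0 f1 x t (cc_step f0 f1 a b x t cur) \<le> period_cost f0 f1 x t ?m"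
    using \<open>0 \<le> f0\<close> unfolding cc_step_eq_adjv_plan by (simp add: rdc_cost)
  show "period_cost f0 f1 x t (cc_step f0 f1 a b x t cur) \<le> period_cost f0 f1 x t (\<lambda>_. 0)"
  proof (cases "?S > 0")
    case False
    then have "?m i = 0" if "i < n_items x" for i
      using that adjv_plan_le_orders[of "sqrt (b / a)" x t cur i] by simp
    then show ?thesis
      unfolding cc_step_eq_adjv_plan using period_cost_cong[of x ?m "\<lambda>_. 0"] by simp
  qed (simp add: cc_step_eq_adjv_plan rdc_cost)
qed

lemma cc_step_le_adjv_plan: "cc_step f0 f1 a b x t cur i \<le> adjv_plan (sqrt (b / a)) x t cur i"
  unfolding cc_step_eq_adjv_plan by simp

lemma cost_comparison_parameters:
  fixes f0 f1 a b :: real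
  assumes "0 < a" and "a \<le> b" and "0 \<le> f0" and "0 < f1"
  defines "r \<equiv> sqrt (b / a)"
  defines "M \<equiv> max (f0 / f1) r"
  shows "1 \<le> r" and "r \<le> M" and "0 \<le> M" and "f0 \<le> M * f1" and "b - a \<le> M * r * a"
proof -
  show "1 \<le> r"
    using assms(1,2) unfolding r_def by simp
  have "r * r * a = b"
    using assms(1,2) unfolding r_def by simp
  show "r \<le> M"
    unfolding M_def by simp
  have "f0 / f1 \<le> M"
    unfolding M_def by simp
  then show "0 \<le> M" and "f0 \<le> M * f1"
    using \<open>1 \<le> r\<close> \<open>r \<le> M\<close> \<open>0 < f1\<close> by (auto simp: pos_divide_le_eq)
  have "b \<le> M * r * a"
    using \<open>r * r * a = b\<close> mult_right_mono[OF \<open>r \<le> M\<close>, of "r * a"] \<open>0 < a\<close> \<open>1 \<le> r\<close>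
    by (simp add: mult.assoc)
  then show "b - a \<le> M * r * a"
    using \<open>0 < a\<close> by simp
qed

lemma cc_step_amortized_fdc_used:
  assumes "0 \<le> a" and "a \<le> b" and "0 \<le> f0" and "0 < f1" and costs: "costs_within a b x t"
    and op: "\<And>i. i < n_items x \<Longrightarrow> op i \<le> orders x t i" and "0 < (\<Sum>i<n_items x. op i)"
    and "1 \<le> sqrt (b / a)" and "sqrt (b / a) \<le> M" and "f0 \<le> M * f1"
    and "b - a \<le> M * sqrt (b / a) * a"
  shows "amortized_le f0 f1 (1 + M) (b - a) x t cur (cc_step f0 f1 a b x t cur) op"
proof -
  have "0 \<le> M"
    using \<open>1 \<le> sqrt (b / a)\<close> \<open>sqrt (b / a) \<le> M\<close> by linarith
  let ?alg = "cc_step f0 f1 a b x t cur" and ?m = "adjv_plan (sqrt (b / a)) x t cur"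
  let ?n = "n_items x" and ?shortfall = "\<Sum>i<n_items x. real (op i - cur i)"
  have "(\<Sum>i<?n. real (?alg i - op i)) \<le> (\<Sum>i<?n. real (?m i - op i))"
    using cc_step_le_adjv_plan by (intro sum_mono) (simp add: diff_le_mono)
  then have "period_cost f0 f1 x t ?alg + (b - a) * (\<Sum>i<?n. real (?alg i - op i))
      \<le> period_cost f0 f1 x t ?m + (b - a) * (\<Sum>i<?n. real (?m i - op i))"
    using cc_step_cost_le(1)[OF \<open>0 \<le> f0\<close>] \<open>a \<le> b\<close> by (intro add_mono mult_left_mono) auto
  also have "\<dots> \<le> f0 + f1 + (1 + M) * var_cost x t op + (b - a) * ?shortfall"
    using period_cost_le_fixed_plus_var_cost[of f0 f1 x t ?m] \<open>0 \<le> f0\<close> \<open>0 < f1\<close>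
      var_cost_adjv_plan_amortized[OF costs \<open>0 \<le> a\<close> op \<open>1 \<le> sqrt (b / a)\<close>,
        of "1 + M" "b - a" "b - a" cur]
      \<open>sqrt (b / a) \<le> M\<close> \<open>b - a \<le> M * sqrt (b / a) * a\<close>
    by simp
  also have "\<dots> \<le> (1 + M) * period_cost f0 f1 x t op + (b - a) * ?shortfall"
    using \<open>0 < (\<Sum>i<?n. op i)\<close> \<open>f0 \<le> M * f1\<close> \<open>0 \<le> M\<close> \<open>0 \<le> f0\<close> \<open>0 < f1\<close>
    by (simp add: period_cost_eq_var_cost algebra_simps)
  finally show ?thesis
    unfolding amortized_le_def .
qed

lemma cc_step_amortized_rdc_only:
  assumes "0 < a" and "a \<le> b" and "0 \<le> f0" and "0 < f1" and costs: "costs_within a b x t"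
    and op: "\<And>i. i < n_items x \<Longrightarrow> op i = 0"
    and "1 \<le> sqrt (b / a)" and "0 \<le> M" and "b - a \<le> M * sqrt (b / a) * a"
  shows "amortized_le f0 f1 (1 + M) (b - a) x t cur (cc_step f0 f1 a b x t cur) op"
proof -
  let ?alg = "cc_step f0 f1 a b x t cur" and ?n = "n_items x"
  have "period_cost f0 f1 x t op = period_cost f0 f1 x t (\<lambda>_. 0)"
    using op by (intro period_cost_cong) simp
  have "(\<Sum>i<?n. real (?alg i - op i)) \<le> (\<Sum>i<?n. real (adjv_plan (sqrt (b / a)) x t cur i))"
    using op cc_step_le_adjv_plan by (intro sum_mono) simp
  then have "(b - a) * (\<Sum>i<?n. real (?alg i - op i))
      \<le> (b - a) * (\<Sum>i<?n. real (adjv_plan (sqrt (b / a)) x t cur i))"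
    using \<open>a \<le> b\<close> by (intro mult_left_mono) auto
  also have "\<dots> \<le> M * var_cost x t (\<lambda>_. 0)"
    using adjv_plan_shipments_le[OF costs _ _ \<open>0 \<le> M\<close> \<open>b - a \<le> M * sqrt (b / a) * a\<close>]
      \<open>0 < a\<close> \<open>1 \<le> sqrt (b / a)\<close>
    by simp
  finally have "period_cost f0 f1 x t ?alg + (b - a) * (\<Sum>i<?n. real (?alg i - op i))
      \<le> period_cost f0 f1 x t (\<lambda>_. 0) + M * var_cost x t (\<lambda>_. 0)"
    using cc_step_cost_le(2)[OF \<open>0 \<le> f0\<close>, of f1 x t a b cur] by linarith
  also have "\<dots> \<le> (1 + M) * period_cost f0 f1 x t (\<lambda>_. 0)"
    using \<open>0 \<le> f0\<close> \<open>0 < f1\<close> \<open>0 \<le> M\<close>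
    by (simp add: period_cost_eq_var_cost distrib_right mult_left_mono)
  also have "\<dots> \<le> (1 + M) * period_cost f0 f1 x t op + (b - a) * (\<Sum>i<?n. real (op i - cur i))"
    using \<open>period_cost f0 f1 x t op = _\<close> \<open>a \<le> b\<close> by (simp add: sum_nonneg)
  finally show ?thesis
    unfolding amortized_le_def .
qed

lemma cc_step_amortized:
  assumes "0 < a" and "a \<le> b" and "0 \<le> f0" and "0 < f1" and costs: "costs_within a b x t"
    and op: "\<And>i. i < n_items x \<Longrightarrow> op i \<le> orders x t i"
  shows "amortized_le f0 f1 (1 + max (f0 / f1) (sqrt (b / a))) (b - a) x t cur
           (cc_step f0 f1 a b x t cur) op"
proof (cases "0 < (\<Sum>i<n_items x. op i)")
  case True
  then show ?thesis
    using cost_comparison_parameters[OF assms(1-4)] assms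
    by (intro cc_step_amortized_fdc_used[OF _ _ _ _ costs op]) auto
next
  case False
  then show ?thesis
    using cost_comparison_parameters[OF assms(1-4)] assms
    by (intro cc_step_amortized_rdc_only[OF _ _ _ _ costs]) auto
qed

lemma cc_step_le_inventory: "cc_step f0 f1 a b x t cur i \<le> cur i"
  by (simp add: cc_step_def Let_def)

lemma cc_step_comp_ratio_le:
  assumes "0 < a" and "a \<le> b" and "0 \<le> f0" and "0 < f1"
  shows "comp_ratio f0 f1 a b (cc_step f0 f1 a b) \<le> ereal (1 + max (f0 / f1) (sqrt (b / a)))"
proof (rule comp_ratio_le_by_amortization[where \<alpha> = "b - a"])
  have "0 \<le> max (f0 / f1) (sqrt (b / a))"
    using \<open>0 \<le> f0\<close> \<open>0 < f1\<close> by (simp add: le_max_iff_disj)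
  then show "0 < 1 + max (f0 / f1) (sqrt (b / a))"
    by linarith
qed (use assms cc_step_le_inventory cc_step_amortized in auto)

section \<open>Order-Size AdjV-Priority\<close>

lemma os_step_eq_adjv_plan:
  "os_step \<eta> \<theta> x t cur =
    (if real (\<Sum>i<n_items x. orders x t i) \<le> \<theta> \<and> (\<forall>i < n_items x. orders x t i \<le> cur i)
     then orders x t else adjv_plan \<eta> x t cur)"
  unfolding os_step_def adjv_plan_def Let_def ..

lemma os_step_le_inventory: "i < n_items x \<Longrightarrow> os_step \<eta> \<theta> x t cur i \<le> cur i"
  by (simp add: os_step_def Let_def)

lemma full_fdc_amortized:
  assumes costs: "costs_within a b x t" and "0 \<le> a" and "a \<le> b" and "0 \<le> f0" and "0 \<le> f1"
    and op: "\<And>i. i < n_items x \<Longrightarrow> op i \<le> orders x t i"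
    and small: "real (\<Sum>i<n_items x. orders x t i) \<le> \<theta>"
    and "1 \<le> B" and "0 \<le> \<alpha>" and budget: "f1 + (b + \<alpha>) * \<theta> \<le> B * f0"
  shows "amortized_le f0 f1 B \<alpha> x t cur (orders x t) op"
proof -
  let ?n = "n_items x"
  let ?shortfall = "\<Sum>i<?n. real (op i - cur i)"
  have "0 \<le> \<alpha> * ?shortfall"
    using \<open>0 \<le> \<alpha>\<close> by (simp add: sum_nonneg)
  show ?thesis
    unfolding amortized_le_def
  proof (cases "0 < (\<Sum>i<?n. orders x t i - op i)")
    case True
    have "var_cost x t (orders x t) \<le> b * real (\<Sum>i<?n. orders x t i)"
      by (rule var_cost_bounds(2)[OF costs]) simp
    moreover have "(\<Sum>i<?n. real (orders x t i - op i)) \<le> real (\<Sum>i<?n. orders x t i)"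
      unfolding of_nat_sum by (intro sum_mono) simp
    moreover have "period_cost f0 f1 x t (orders x t) \<le> f1 + var_cost x t (orders x t)"
      using \<open>0 \<le> f1\<close> by (simp add: period_cost_eq_var_cost)
    ultimately have "period_cost f0 f1 x t (orders x t) + \<alpha> * (\<Sum>i<?n. real (orders x t i - op i))
        \<le> f1 + (b + \<alpha>) * real (\<Sum>i<?n. orders x t i)"
      using mult_left_mono[OF _ \<open>0 \<le> \<alpha>\<close>] by (fastforce simp: distrib_right)
    also have "\<dots> \<le> f1 + (b + \<alpha>) * \<theta>"
      using small \<open>0 \<le> a\<close> \<open>a \<le> b\<close> \<open>0 \<le> \<alpha>\<close> by (simp add: mult_left_mono)
    also have "\<dots> \<le> B * f0"
      by (rule budget)
    also have "\<dots> \<le> B * period_cost f0 f1 x t op"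
      using True var_cost_nonneg[OF costs \<open>0 \<le> a\<close>, of op] \<open>0 \<le> f1\<close> \<open>1 \<le> B\<close>
      unfolding period_cost_eq_var_cost by (intro mult_left_mono) auto
    finally show "period_cost f0 f1 x t (orders x t) + \<alpha> * (\<Sum>i<?n. real (orders x t i - op i))
        \<le> B * period_cost f0 f1 x t op + \<alpha> * ?shortfall"
      using \<open>0 \<le> \<alpha> * ?shortfall\<close> by linarith
  next
    case False
    then have "op i = orders x t i" if "i < ?n" for i
      using op[OF that] that by (simp add: le_antisym)
    then have "period_cost f0 f1 x t (orders x t) = period_cost f0 f1 x t op"
      and "(\<Sum>i<?n. real (orders x t i - op i)) = 0"
      by (auto intro: period_cost_cong)
    moreover have "period_cost f0 f1 x t op \<le> B * period_cost f0 f1 x t op"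
      using period_cost_nonneg[OF costs \<open>0 \<le> a\<close> \<open>0 \<le> f0\<close> \<open>0 \<le> f1\<close>, of op] \<open>1 \<le> B\<close>
      by (simp add: mult_le_cancel_right1)
    ultimately show "period_cost f0 f1 x t (orders x t) + \<alpha> * (\<Sum>i<?n. real (orders x t i - op i))
        \<le> B * period_cost f0 f1 x t op + \<alpha> * ?shortfall"
      using \<open>0 \<le> \<alpha> * ?shortfall\<close> by simp
  qed
qed

lemma fixed_costs_covered:
  assumes "0 \<le> f0" and "0 \<le> f1" and "f1 \<le> f0" and "2 \<le> B"
    and rdc_or_shortfall: "0 < (\<Sum>i<n_items x. orders x t i - op i) \<or> (\<exists>i < n_items x. cur i < op i)"
  shows "f0 + f1 \<le> B * (period_cost f0 f1 x t op - var_cost x t op)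
    + f0 * (\<Sum>i<n_items x. real (op i - cur i))"
  using rdc_or_shortfall
proof
  let ?n = "n_items x" and ?shortfall = "\<Sum>i<n_items x. real (op i - cur i)"
  assume rdc: "0 < (\<Sum>i<?n. orders x t i - op i)"
  have "f0 + f1 \<le> B * (period_cost f0 f1 x t op - var_cost x t op)"
  proof (cases "0 < (\<Sum>i<?n. op i)")
    case True
    then show ?thesis
      using rdc assms(1,2,4) by (simp add: period_cost_eq_var_cost mult_le_cancel_right1)
  next
    case False
    then show ?thesis
      using rdc assms(1,3) mult_right_mono[OF \<open>2 \<le> B\<close> \<open>0 \<le> f0\<close>]
      by (simp add: period_cost_eq_var_cost)
  qed
  moreover have "0 \<le> f0 * ?shortfall"
    using \<open>0 \<le> f0\<close> by (simp add: sum_nonneg)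
  ultimately show ?thesis by linarith
next
  let ?n = "n_items x" and ?shortfall = "\<Sum>i<n_items x. real (op i - cur i)"
  assume "\<exists>i < ?n. cur i < op i"
  then obtain j where "j < ?n" and "cur j < op j" by blast
  then have "1 \<le> ?shortfall"
    using member_le_sum[of j "{..<?n}" "\<lambda>i. real (op i - cur i)"] by simp
  then have "f0 \<le> f0 * ?shortfall"
    using \<open>0 \<le> f0\<close> by (simp add: mult_le_cancel_left1)
  moreover have "0 < (\<Sum>i<?n. op i)"
    using \<open>j < ?n\<close> \<open>cur j < op j\<close> by (simp add: sum_pos2)
  then have "f1 \<le> period_cost f0 f1 x t op - var_cost x t op"
    using \<open>0 \<le> f0\<close> by (simp add: period_cost_eq_var_cost)
  then have "f1 \<le> B * (period_cost f0 f1 x t op - var_cost x t op)"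
    using scale_le[of B "period_cost f0 f1 x t op - var_cost x t op"] \<open>2 \<le> B\<close> \<open>0 \<le> f1\<close>
    by linarith
  ultimately show ?thesis by linarith
qed

lemma adjv_plan_amortized_rdc_or_shortfall:
  assumes costs: "costs_within a b x t" and "0 \<le> a" and "0 \<le> f0" and "0 \<le> f1" and "f1 \<le> f0"
    and op: "\<And>i. i < n_items x \<Longrightarrow> op i \<le> orders x t i"
    and "1 \<le> \<gamma>" and "\<gamma> \<le> B" and "2 \<le> B"
    and \<alpha>: "\<alpha> \<le> (B - 1) * \<gamma> * a" "b - a \<le> \<alpha> - f0"
    and rdc_or_shortfall: "0 < (\<Sum>i<n_items x. orders x t i - op i) \<or> (\<exists>i < n_items x. cur i < op i)"
  shows "amortized_le f0 f1 B \<alpha> x t cur (adjv_plan \<gamma> x t cur) op"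
proof -
  let ?n = "n_items x" and ?m = "adjv_plan \<gamma> x t cur"
  let ?shortfall = "\<Sum>i<?n. real (op i - cur i)"
  have "period_cost f0 f1 x t ?m + \<alpha> * (\<Sum>i<?n. real (?m i - op i))
      \<le> f0 + f1 + B * var_cost x t op + (\<alpha> - f0) * ?shortfall"
    using period_cost_le_fixed_plus_var_cost[OF \<open>0 \<le> f0\<close> \<open>0 \<le> f1\<close>, of x t ?m]
      var_cost_adjv_plan_amortized[OF costs \<open>0 \<le> a\<close> op \<open>1 \<le> \<gamma>\<close> \<open>\<gamma> \<le> B\<close> \<alpha>, of cur]
    by linarith
  also have "\<dots> \<le> B * period_cost f0 f1 x t op + \<alpha> * ?shortfall"
    using fixed_costs_covered[OF \<open>0 \<le> f0\<close> \<open>0 \<le> f1\<close> \<open>f1 \<le> f0\<close> \<open>2 \<le> B\<close> rdc_or_shortfall]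
    by (simp add: algebra_simps)
  finally show ?thesis
    unfolding amortized_le_def .
qed

lemma adjv_plan_amortized_large_order:
  assumes costs: "costs_within a b x t" and "0 \<le> a" and "0 \<le> f0" and "0 \<le> f1"
    and op: "\<And>i. i < n_items x \<Longrightarrow> op i = orders x t i"
    and stocked: "\<And>i. i < n_items x \<Longrightarrow> orders x t i \<le> cur i"
    and large: "\<theta> < real (\<Sum>i<n_items x. orders x t i)" and "0 \<le> \<theta>" and "f0 \<le> 2 * \<gamma> * a * \<theta>"
    and "1 \<le> \<gamma>" and "3 * \<gamma> \<le> B"
  shows "amortized_le f0 f1 B \<alpha> x t cur (adjv_plan \<gamma> x t cur) op"
proof -
  let ?n = "n_items x" and ?m = "adjv_plan \<gamma> x t cur"
  have no_surplus: "(\<Sum>i<?n. real (?m i - op i)) = 0"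
    using op adjv_plan_le_orders[of \<gamma> x t cur] by simp
  have no_shortfall: "(\<Sum>i<?n. real (op i - cur i)) = 0"
    using op stocked by simp
  have "var_cost x t ?m \<le> \<gamma> * var_cost x t op"
    using var_cost_adjv_plan_amortized[where B = \<gamma> and \<alpha> = 0 and \<beta> = "b - a" and op = op and cur = cur,
        OF costs \<open>0 \<le> a\<close> _ \<open>1 \<le> \<gamma>\<close>] op \<open>1 \<le> \<gamma>\<close> \<open>0 \<le> a\<close> no_shortfall
    by simp
  have "a * real (\<Sum>i<?n. orders x t i) \<le> var_cost x t op"
    using op by (intro var_cost_bounds(1)[OF costs]) simp
  then have "a * \<theta> \<le> var_cost x t op"
    using mult_left_mono[OF less_imp_le[OF large] \<open>0 \<le> a\<close>] by simp
  then have "2 * \<gamma> * (a * \<theta>) \<le> 2 * \<gamma> * var_cost x t op"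
    using \<open>1 \<le> \<gamma>\<close> by (intro mult_left_mono) auto
  then have "f0 \<le> 2 * \<gamma> * var_cost x t op"
    using \<open>f0 \<le> 2 * \<gamma> * a * \<theta>\<close> by (simp add: mult.assoc)
  have "0 < real (\<Sum>i<?n. orders x t i)"
    using large \<open>0 \<le> \<theta>\<close> by linarith
  then have "0 < (\<Sum>i<?n. op i)"
    using op by (simp del: of_nat_sum)
  then have "f1 + var_cost x t op \<le> period_cost f0 f1 x t op"
    using \<open>0 \<le> f0\<close> by (simp add: period_cost_eq_var_cost)
  have "period_cost f0 f1 x t ?m \<le> f1 + 3 * \<gamma> * var_cost x t op"
    using period_cost_le_fixed_plus_var_cost[OF \<open>0 \<le> f0\<close> \<open>0 \<le> f1\<close>, of x t ?m]
      \<open>var_cost x t ?m \<le> \<gamma> * var_cost x t op\<close> \<open>f0 \<le> 2 * \<gamma> * var_cost x t op\<close>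
    by linarith
  also have "\<dots> \<le> B * (f1 + var_cost x t op)"
    using mult_right_mono[OF \<open>3 * \<gamma> \<le> B\<close> var_cost_nonneg[OF costs \<open>0 \<le> a\<close>, of op]]
      mult_right_mono[of 1 B f1] \<open>1 \<le> \<gamma>\<close> \<open>3 * \<gamma> \<le> B\<close> \<open>0 \<le> f1\<close>
    by (simp add: distrib_left)
  also have "\<dots> \<le> B * period_cost f0 f1 x t op"
    using \<open>f1 + var_cost x t op \<le> period_cost f0 f1 x t op\<close> \<open>1 \<le> \<gamma>\<close> \<open>3 * \<gamma> \<le> B\<close>
    by (intro mult_left_mono) auto
  finally show ?thesis
    unfolding amortized_le_def no_surplus no_shortfall by simp
qed

lemma order_size_parameters:
  fixes f0 f1 a b :: real
  assumes "0 < a" and "a \<le> b" and "0 < f1" and "f1 \<le> f0"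
  defines "E \<equiv> max (f0 / 2) b"
  defines "\<eta> \<equiv> sqrt (E / a)"
  shows "b \<le> E" and "f0 \<le> 2 * E" and "1 \<le> \<eta>" and "\<eta> * \<eta> * a = E"
    and "1 + 4 * \<eta> \<le> (4 + sqrt 2) * \<eta>" and "0 \<le> f0 / (2 * a * \<eta>)"
    and "2 * \<eta> * a * (f0 / (2 * a * \<eta>)) = f0"
proof -
  show "b \<le> E" and "f0 \<le> 2 * E"
    unfolding E_def by auto
  then have "1 \<le> E / a"
    using assms(1,2) by simp
  then show "1 \<le> \<eta>" and "\<eta> * \<eta> * a = E"
    using \<open>0 < a\<close> unfolding \<eta>_def by auto
  have "1 * 1 \<le> sqrt 2 * \<eta>"
    using \<open>1 \<le> \<eta>\<close> by (intro mult_mono) auto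
  then show "1 + 4 * \<eta> \<le> (4 + sqrt 2) * \<eta>"
    by (simp add: algebra_simps)
  show "0 \<le> f0 / (2 * a * \<eta>)" and "2 * \<eta> * a * (f0 / (2 * a * \<eta>)) = f0"
    using assms(1,3,4) \<open>1 \<le> \<eta>\<close> by auto
qed

lemma small_order_budget:
  fixes f0 f1 a b E \<eta> \<theta> B :: real
  assumes "0 < f1" and "f1 \<le> f0" and "b \<le> E" and "1 \<le> \<eta>" and "0 \<le> \<theta>"
    and "\<eta> * \<eta> * a = E" and "2 * \<eta> * a * \<theta> = f0" and "1 + 4 * \<eta> \<le> B"
  shows "f1 + (b + 4 * E) * \<theta> \<le> B * f0"
proof -
  have "E * \<theta> = \<eta> * f0 / 2"
    using assms(6,7) by (auto simp: algebra_simps)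
  have "(b + 4 * E) * \<theta> \<le> 5 * (E * \<theta>)"
    using mult_right_mono[OF \<open>b \<le> E\<close> \<open>0 \<le> \<theta>\<close>] by (simp add: algebra_simps)
  also have "\<dots> = 5 / 2 * (\<eta> * f0)"
    using \<open>E * \<theta> = \<eta> * f0 / 2\<close> by simp
  finally have "(b + 4 * E) * \<theta> \<le> 5 / 2 * (\<eta> * f0)" .
  moreover have "f0 \<le> \<eta> * f0"
    using assms(1,2,4) by (simp add: mult_le_cancel_right1)
  moreover have "(1 + 4 * \<eta>) * f0 \<le> B * f0"
    using assms(1,2,8) by (intro mult_right_mono) auto
  then have "f0 + 4 * (\<eta> * f0) \<le> B * f0"
    by (simp add: algebra_simps)
  ultimately show ?thesis
    using assms(1,2) by linarith
qed

lemma os_step_amortized: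
  fixes f0 f1 a b :: real
  assumes "0 < a" and "a \<le> b" and "0 < f1" and "f1 \<le> f0" and costs: "costs_within a b x t"
    and op: "\<And>i. i < n_items x \<Longrightarrow> op i \<le> orders x t i"
  defines "E \<equiv> max (f0 / 2) b"
  defines "\<eta> \<equiv> sqrt (E / a)"
  shows "amortized_le f0 f1 ((4 + sqrt 2) * \<eta>) (4 * E) x t cur (os_step \<eta> (f0 / (2 * a * \<eta>)) x t cur) op"
proof -
  define \<theta> where "\<theta> = f0 / (2 * a * \<eta>)"
  define B where "B = (4 + sqrt 2) * \<eta>"
  let ?n = "n_items x"
  note params = order_size_parameters[OF assms(1-4), folded E_def, folded \<eta>_def, folded \<theta>_def B_def]
  have "amortized_le f0 f1 B (4 * E) x t cur (os_step \<eta> \<theta> x t cur) op"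
  proof (cases "real (\<Sum>i<?n. orders x t i) \<le> \<theta> \<and> (\<forall>i < ?n. orders x t i \<le> cur i)")
    case True
    then have step: "os_step \<eta> \<theta> x t cur = orders x t"
      unfolding os_step_eq_adjv_plan by simp
    show ?thesis
      unfolding step using True params \<open>0 < a\<close> \<open>a \<le> b\<close> \<open>0 < f1\<close> \<open>f1 \<le> f0\<close>
      by (intro full_fdc_amortized[OF costs _ \<open>a \<le> b\<close> _ _ op _ _ _ small_order_budget]) auto
  next
    case False
    then have step: "os_step \<eta> \<theta> x t cur = adjv_plan \<eta> x t cur"
      unfolding os_step_eq_adjv_plan by auto
    show ?thesis
    proof (cases "0 < (\<Sum>i<?n. orders x t i - op i) \<or> (\<exists>i < ?n. cur i < op i)")
      case True
      have "4 * \<eta> * (\<eta> * a) \<le> (B - 1) * (\<eta> * a)"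
        using params \<open>0 < a\<close> by (intro mult_right_mono) auto
      then have "4 * E \<le> (B - 1) * \<eta> * a"
        unfolding params(4)[symmetric] by (simp only: mult.assoc)
      moreover have "b - a \<le> 4 * E - f0"
        using params \<open>0 < a\<close> \<open>a \<le> b\<close> by linarith
      ultimately show ?thesis
        unfolding step using params \<open>0 < a\<close> \<open>0 < f1\<close> \<open>f1 \<le> f0\<close>
        by (intro adjv_plan_amortized_rdc_or_shortfall[OF costs _ _ _ _ op _ _ _ _ _ True]) auto
    next
      case no_rdc_no_shortfall: False
      then have op_eq: "op i = orders x t i" if "i < ?n" for i
        using op[OF that] that by (simp add: le_antisym)
      moreover have "orders x t i \<le> cur i" if "i < ?n" for i
        using no_rdc_no_shortfall op_eq[OF that] that by (metis not_less)
      moreover have "\<theta> < real (\<Sum>i<?n. orders x t i)"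
        using False calculation by auto
      ultimately show ?thesis
        unfolding step using params \<open>0 < a\<close> \<open>0 < f1\<close> \<open>f1 \<le> f0\<close>
        by (intro adjv_plan_amortized_large_order[OF costs]) auto
    qed
  qed
  then show ?thesis
    unfolding B_def \<theta>_def .
qed

lemma os_step_comp_ratio_le:
  fixes f0 f1 a b :: real
  assumes "0 < a" and "a \<le> b" and "0 < f1" and "f1 \<le> f0"
  defines "\<eta> \<equiv> sqrt (max (f0 / 2) b / a)"
  shows "comp_ratio f0 f1 a b (os_step \<eta> (f0 / (2 * a * \<eta>))) \<le> ereal ((4 + sqrt 2) * \<eta>)"
proof (rule comp_ratio_le_by_amortization[where \<alpha> = "4 * max (f0 / 2) b"])
  have "1 \<le> \<eta>"
    using assms unfolding \<eta>_def by (simp add: le_max_iff_disj)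
  then show "0 < (4 + sqrt 2) * \<eta>"
    by (simp add: add_pos_pos)
qed (use assms os_step_le_inventory os_step_amortized in auto)

section \<open>Better-of-Two\<close>

lemma sqrt_max_divide:
  fixes p q a :: real
  assumes "0 < a"
  shows "sqrt (max p q / a) = max (sqrt (p / a)) (sqrt (q / a))"
  using assms unfolding max_divide_distrib_right by (simp add: max_def)

lemma four_plus_sqrt2_mult_sqrt_half:
  "(4 + sqrt 2) * sqrt (y / 2) = (2 * sqrt 2 + 1) * sqrt y"
proof -
  have "4 + sqrt 2 = (2 * sqrt 2 + 1) * sqrt 2"
    by (simp add: algebra_simps)
  then show ?thesis
    by (simp add: real_sqrt_divide)
qed

lemma one_plus_le_four_plus_sqrt2_mult:
  fixes r :: real
  assumes "1 \<le> r"
  shows "1 + r \<le> (4 + sqrt 2) * r"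
proof -
  have "0 \<le> sqrt 2 * r"
    using assms by simp
  then show ?thesis
    using assms unfolding distrib_right by linarith
qed

lemma better_of_two_comp_ratio_le:
  fixes f0 f1 a b :: real
  assumes "0 \<le> f0" and "0 < f1" and "0 < a" and "a \<le> b"
  shows "comp_ratio f0 f1 a b (better_of_two f0 f1 a b)
    \<le> min (ereal (1 + max (f0 / f1) (sqrt (b / a))))
          (if f0 \<ge> f1 then ereal ((4 + sqrt 2) * sqrt (max (f0 / 2) b / a)) else \<infinity>)"
proof -
  define r where "r = sqrt (b / a)"
  define \<eta> where "\<eta> = sqrt (max (f0 / 2) b / a)"
  let ?R_cc = "1 + max (f0 / f1) r" and ?R_os = "(4 + sqrt 2) * \<eta>"
  have "1 \<le> r"
    using assms unfolding r_def by simp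
  have \<eta>_max: "\<eta> = max (sqrt (f0 / (2 * a))) r"
    unfolding \<eta>_def r_def sqrt_max_divide[OF \<open>0 < a\<close>] by simp
  show ?thesis
  proof (cases "f0 \<le> f1 \<or> ?R_cc \<le> (4 + sqrt 2) * max (sqrt (f0 / (2 * a))) r")
    case True
    then have "better_of_two f0 f1 a b = cc_step f0 f1 a b"
      unfolding better_of_two_def r_def by simp
    moreover have "?R_cc \<le> ?R_os" if "f1 \<le> f0"
    proof (cases "f0 \<le> f1")
      case True
      then have "?R_cc = 1 + r"
        using \<open>f1 \<le> f0\<close> \<open>0 < f1\<close> \<open>1 \<le> r\<close> by simp
      also have "\<dots> \<le> (4 + sqrt 2) * r"
        using \<open>1 \<le> r\<close> by (rule one_plus_le_four_plus_sqrt2_mult)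
      also have "\<dots> \<le> ?R_os"
        unfolding \<eta>_max by (intro mult_left_mono) auto
      finally show ?thesis .
    qed (use True \<eta>_max in simp)
    ultimately show ?thesis
      using cc_step_comp_ratio_le[OF \<open>0 < a\<close> \<open>a \<le> b\<close> \<open>0 \<le> f0\<close> \<open>0 < f1\<close>]
      unfolding r_def \<eta>_def by (auto simp: min_def)
  next
    case False
    then have "better_of_two f0 f1 a b = os_step \<eta> (f0 / (2 * a * \<eta>))"
      unfolding better_of_two_def r_def \<eta>_def Let_def by simp
    then show ?thesis
      using False os_step_comp_ratio_le[OF \<open>0 < a\<close> \<open>a \<le> b\<close> \<open>0 < f1\<close>, of f0] \<eta>_max
      unfolding r_def \<eta>_def by (auto simp: min_def)
  qed
qed

lemma better_of_two_bound_le: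
  fixes f0 f1 a b :: real
  assumes "0 \<le> f0" and "0 < f1" and "0 < a" and "a \<le> b"
  shows "min (ereal (1 + max (f0 / f1) (sqrt (b / a))))
           (if f0 \<ge> f1 then ereal ((4 + sqrt 2) * sqrt (max (f0 / 2) b / a)) else \<infinity>)
    \<le> ereal (max (min (2 * (f0 / f1)) ((2 * sqrt 2 + 1) * sqrt (f0 / a))) ((4 + sqrt 2) * sqrt (b / a)))"
proof -
  define r where "r = sqrt (b / a)"
  define Q where "Q = max (min (2 * (f0 / f1)) ((2 * sqrt 2 + 1) * sqrt (f0 / a))) ((4 + sqrt 2) * r)"
  let ?R_cc = "1 + max (f0 / f1) r" and ?R_os = "(4 + sqrt 2) * sqrt (max (f0 / 2) b / a)"
  have "1 \<le> r"
    using assms unfolding r_def by simp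
  have cc_le: "?R_cc \<le> Q" if "f0 / f1 \<le> r"
    using that one_plus_le_four_plus_sqrt2_mult[OF \<open>1 \<le> r\<close>] unfolding Q_def by simp
  have "min ?R_cc ?R_os \<le> Q" if "f1 \<le> f0"
  proof (cases "f0 / f1 \<le> r")
    case False
    moreover have "1 \<le> f0 / f1"
      using that \<open>0 < f1\<close> by simp
    ultimately have "?R_cc \<le> 2 * (f0 / f1)"
      by simp
    show ?thesis
    proof (cases "f0 / 2 \<le> b")
      case True
      then have "sqrt (max (f0 / 2) b / a) = r"
        unfolding r_def by (simp add: max_def)
      then show ?thesis
        unfolding Q_def by (simp add: min.coboundedI2)
    next
      case False
      then have "?R_os = (2 * sqrt 2 + 1) * sqrt (f0 / a)"
        using four_plus_sqrt2_mult_sqrt_half[of "f0 / a"] by (simp add: max_def mult.commute)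
      then show ?thesis
        using \<open>?R_cc \<le> 2 * (f0 / f1)\<close> unfolding Q_def by (simp add: min_def max_def)
    qed
  qed (use cc_le in simp)
  moreover have "?R_cc \<le> Q" if "\<not> f1 \<le> f0"
  proof (rule cc_le)
    have "f0 / f1 \<le> 1"
      using that \<open>0 < f1\<close> by simp
    then show "f0 / f1 \<le> r"
      using \<open>1 \<le> r\<close> by linarith
  qed
  ultimately show ?thesis
    unfolding Q_def r_def by (simp del: ereal_min ereal_max add: ereal_min[symmetric] ereal_max[symmetric])
qed

theorem corollary1:
  fixes f0 f1 a b :: real
  assumes "0 \<le> f0" and "0 < f1" and "0 < a" and "a < b"
  shows "comp_ratio f0 f1 a b (better_of_two f0 f1 a b)
           \<le> min (ereal (1 + max (f0 / f1) (sqrt (b / a))))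
                 (if f0 \<ge> f1 then ereal ((4 + sqrt 2) * sqrt (max (f0 / 2) b / a)) else \<infinity>)
       \<and> min (ereal (1 + max (f0 / f1) (sqrt (b / a))))
                 (if f0 \<ge> f1 then ereal ((4 + sqrt 2) * sqrt (max (f0 / 2) b / a)) else \<infinity>)
           \<le> ereal (max (min (2 * (f0 / f1)) ((2 * sqrt 2 + 1) * sqrt (f0 / a)))
                         ((4 + sqrt 2) * sqrt (b / a)))"
  using better_of_two_comp_ratio_le[of f0 f1 a b] better_of_two_bound_le[of f0 f1 a b] assms
  by simp

end
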